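(* Let $F$ be $(\ell,\omega)$-relatively smooth on $\mathcal X\cap\mathcal S$. For any $\rho>\ell$ and all $x\in\mathcal X\cap\mathcal S$, $$\rho^2D^{\mathrm{sym}}_\omega(\hat x,x^+)\le\frac{\ell}{\rho-\ell}\big(\Delta_\rho(x)+\Delta^+_\rho(x)\big).$$
   Context: Let $\mathcal X\subseteq\mathbb R^d$ be closed and convex, $\|\cdot\|$ a norm on $\mathbb R^d$. The problem is $\min_{x\in\mathcal X}\Phi(x):=F(x)+r(x)$, with $F$ differentiable and $r:\mathbb R^d\to\mathbb R$ convex, proper, lower semicontinuous. A DGF is $\omega:\mathrm{cl}(\mathcal S)\to\mathbb R$, $\mathcal S$ open with $\mathrm{ri}(\mathcal X)\subseteq\mathcal S$, $\omega$ continuously differentiable on $\mathcal S$ and $1$-strongly convex w.r.t. $\|\cdot\|$ on $\mathrm{cl}(\mathcal S)$; $D_\omega(x,y)=\omega(x)-\omega(y)-\langle\nabla\omega(y),x-y\rangle$, $D^{\mathrm{sym}}_\omega(x,y):=D_\omega(x,y)+D_\omega(y,x)$. For $\rho>0$ and $x\in\mathcal X\cap\mathcal S$: $\hat x:=\arg\min_{y\in\mathcal X}[\Phi(y)+\rho D_\omega(y,x)]$, $\Delta_\rho(x):=\rho^2D^{\mathrm{sym}}_\omega(\hat x,x)$; $x^+:=\arg\min_{y\in\mathcal X}[\langle\nabla F(x),y\rangle+r(y)+\rho D_\omega(y,x)]$, $\Delta^+_\rho(x):=\rho^2D^{\mathrm{sym}}_\omega(x^+,x)$ (minimizers assumed to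 exist). $F$ is $(\ell,\omega)$-relatively smooth on $\mathcal X\cap\mathcal S$ if for all $x,y\in\mathcal X\cap\mathcal S$: $-\ell D_\omega(x,y)\le F(x)-F(y)-\langle\nabla F(y),x-y\rangle\le\ell D_\omega(x,y)$. *)

theory Defs
  imports "HOL-Analysis.Analysis"
begin

definition is_norm :: "('a::real_vector \<Rightarrow> real) \<Rightarrow> bool" where
  "is_norm N \<longleftrightarrow> (\<forall>x. 0 \<le> N x) \<and> (\<forall>x. N x = 0 \<longleftrightarrow> x = 0)
     \<and> (\<forall>c x. N (c *\<^sub>R x) = \<bar>c\<bar> * N x) \<and> (\<forall>x y. N (x + y) \<le> N x + N y)"

definition lsc :: "('a::topological_space \<Rightarrow> real) \<Rightarrow> bool" where
  "lsc f \<longleftrightarrow> (\<forall>x. \<forall>e>0. \<forall>\<^sub>F y in at x. f x - e < f y)"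

definition strongly_convex_on :: "'a::real_vector set \<Rightarrow> ('a \<Rightarrow> real) \<Rightarrow> real \<Rightarrow> ('a \<Rightarrow> real) \<Rightarrow> bool" where
  "strongly_convex_on C N \<mu> f \<longleftrightarrow> convex C \<and>
     (\<forall>x\<in>C. \<forall>y\<in>C. \<forall>t\<in>{0..1}.
        f ((1 - t) *\<^sub>R x + t *\<^sub>R y) \<le> (1 - t) * f x + t * f y - \<mu> / 2 * t * (1 - t) * (N (x - y))\<^sup>2)"

definition bregman :: "('a::real_inner \<Rightarrow> real) \<Rightarrow> ('a \<Rightarrow> 'a) \<Rightarrow> 'a \<Rightarrow> 'a \<Rightarrow> real" where
  "bregman w gw x y = w x - w y - inner (gw y) (x - y)"

definition bregman_sym :: "('a::real_inner \<Rightarrow> real) \<Rightarrow> ('a \<Rightarrow> 'a) \<Rightarrow> 'a \<Rightarrow> 'a \<Rightarrow> real" where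
  "bregman_sym w gw x y = bregman w gw x y + bregman w gw y x"

definition is_DGF :: "'a::euclidean_space set \<Rightarrow> 'a set \<Rightarrow> ('a \<Rightarrow> real) \<Rightarrow> ('a \<Rightarrow> real) \<Rightarrow> ('a \<Rightarrow> 'a) \<Rightarrow> bool" where
  "is_DGF X S N w gw \<longleftrightarrow> open S \<and> rel_interior X \<subseteq> S
     \<and> (\<forall>x\<in>S. (w has_derivative (\<lambda>h. inner (gw x) h)) (at x))
     \<and> continuous_on S gw
     \<and> strongly_convex_on (closure S) N 1 w"

definition rel_smooth :: "('a::real_inner \<Rightarrow> real) \<Rightarrow> ('a \<Rightarrow> 'a) \<Rightarrow> real \<Rightarrow> ('a \<Rightarrow> real) \<Rightarrow> ('a \<Rightarrow> 'a) \<Rightarrow> 'a set \<Rightarrow> bool" where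
  "rel_smooth F gF l w gw A \<longleftrightarrow> (\<forall>x\<in>A. \<forall>y\<in>A.
      - l * bregman w gw x y \<le> F x - F y - inner (gF y) (x - y) \<and>
      F x - F y - inner (gF y) (x - y) \<le> l * bregman w gw x y)"

definition is_prox_point :: "'a set \<Rightarrow> ('a \<Rightarrow> real) \<Rightarrow> ('a::real_inner \<Rightarrow> real) \<Rightarrow> ('a \<Rightarrow> 'a) \<Rightarrow> real \<Rightarrow> 'a \<Rightarrow> 'a \<Rightarrow> bool" where
  "is_prox_point X Phi w gw \<rho> x xh \<longleftrightarrow> xh \<in> X \<and>
     (\<forall>y\<in>X. Phi xh + \<rho> * bregman w gw xh x \<le> Phi y + \<rho> * bregman w gw y x)"

definition is_prox_grad_point :: "'a set \<Rightarrow> ('a \<Rightarrow> 'a) \<Rightarrow> ('a \<Rightarrow> real) \<Rightarrow> ('a::real_inner \<Rightarrow> real) \<Rightarrow> ('a \<Rightarrow> 'a) \<Rightarrow> real \<Rightarrow> 'a \<Rightarrow> 'a \<Rightarrow> bool" where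
  "is_prox_grad_point X gF r w gw \<rho> x xp \<longleftrightarrow> xp \<in> X \<and>
     (\<forall>y\<in>X. inner (gF x) xp + r xp + \<rho> * bregman w gw xp x
             \<le> inner (gF x) y + r y + \<rho> * bregman w gw y x)"

end

theory Submission
  imports Defs
begin

text \<open>
  Both minimisers satisfy a first-order variational inequality. Testing the one for \<open>xh\<close> at
  \<open>xp\<close> and vice versa and adding, the \<open>r\<close>-terms cancel and the Bregman terms combine to
  \<open>\<rho> Dsym(xh, xp) \<le> \<langle>\<nabla>F xh - \<nabla>F x, xp - xh\<rangle>\<close>. Writing this inner product as a signed sum
  of three linearisation errors of \<open>F\<close>, relative smoothness bounds it by \<open>\<ell>\<close> times the sum of
  the three symmetric divergences among \<open>x, xh, xp\<close>; since \<open>\<rho> > \<ell>\<close> the term in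
  \<open>Dsym(xh, xp)\<close> can be moved to the left.
  Closedness of \<open>X\<close>, lower semicontinuity of \<open>r\<close> and strong convexity of \<open>w\<close> (hence the norm \<open>N\<close>) only matter
  for the existence of the minimisers, which is assumed.
\<close>

lemma variational_inequality_smooth_plus_convex:
  fixes G r :: "'a::real_normed_vector \<Rightarrow> real"
  assumes G: "(G has_derivative G') (at z)"
    and r: "convex_on UNIV r" and X: "convex X" and z: "z \<in> X" and y: "y \<in> X"
    and min: "\<forall>u\<in>X. G z + r z \<le> G u + r u"
  shows "0 \<le> r y - r z + G' (y - z)"
proof -
  define d where "d = y - z"
  define \<phi> where "\<phi> t = G (z + t *\<^sub>R d)" for t :: real
  have line: "((\<lambda>t::real. z + t *\<^sub>R d) has_derivative (\<lambda>t. t *\<^sub>R d)) (at 0 within {0<..})"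
    by (auto intro!: derivative_eq_intros)
  have "((\<lambda>t. G (z + t *\<^sub>R d)) has_derivative (\<lambda>t. G' (t *\<^sub>R d))) (at 0 within {0<..})"
    using has_derivative_compose[OF line] G by simp
  moreover have "(\<lambda>t. G' (t *\<^sub>R d)) = (*) (G' d)"
    using linear_cmul[OF has_derivative_linear[OF G]] by (auto simp: mult.commute)
  ultimately have "(\<phi> has_field_derivative G' d) (at 0 within {0<..})"
    unfolding has_field_derivative_def \<phi>_def by simp
  hence lim: "((\<lambda>t. (\<phi> t - \<phi> 0) / (t - 0)) \<longlongrightarrow> G' d) (at_right 0)"
    using has_field_derivative_iff by blast
  have "\<forall>\<^sub>F t in at_right (0::real). r z - r y \<le> (\<phi> t - \<phi> 0) / (t - 0)"
    unfolding eventually_at_right[of 0 1, OF zero_less_one]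
  proof (intro exI[of _ 1] conjI allI impI)
    fix t :: real assume t: "0 < t" "t < 1"
    have seg: "z + t *\<^sub>R d = (1 - t) *\<^sub>R z + t *\<^sub>R y" by (simp add: d_def algebra_simps)
    have "z + t *\<^sub>R d \<in> X" unfolding seg using convexD[OF X z y, of "1 - t" t] t by simp
    hence "G z + r z \<le> \<phi> t + r (z + t *\<^sub>R d)" using min by (simp add: \<phi>_def)
    moreover have "r (z + t *\<^sub>R d) \<le> (1 - t) * r z + t * r y"
      unfolding seg using convex_onD[OF r, of t z y] t by simp
    ultimately have "t * (r z - r y) \<le> \<phi> t - \<phi> 0" by (simp add: \<phi>_def algebra_simps)
    thus "r z - r y \<le> (\<phi> t - \<phi> 0) / (t - 0)" using t by (simp add: field_simps)
  qed simp
  hence "r z - r y \<le> G' d"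
    by (rule tendsto_lowerbound[OF lim]) simp
  thus ?thesis by (simp add: d_def)
qed

lemma has_derivative_bregman_left:
  assumes "(w has_derivative (\<lambda>h. inner g h)) (at z)"
  shows "((\<lambda>y. bregman w gw y x) has_derivative (\<lambda>h. inner (g - gw x) h)) (at z)"
  unfolding bregman_def
  by (rule has_derivative_eq_rhs, (rule derivative_eq_intros assms | simp)+)
     (simp add: inner_diff_left)

lemma bregman_sym_eq_inner: "bregman_sym w gw x y = inner (gw x - gw y) (x - y)"
  by (simp add: bregman_sym_def bregman_def inner_diff_left inner_diff_right)

lemma prox_point_variational_inequality:
  assumes F: "(F has_derivative (\<lambda>h. inner (gF xh) h)) (at xh)"
    and w: "(w has_derivative (\<lambda>h. inner (gw xh) h)) (at xh)"
    and r: "convex_on UNIV r" and X: "convex X"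
    and xh: "is_prox_point X (\<lambda>y. F y + r y) w gw \<rho> x xh" and y: "y \<in> X"
  shows "0 \<le> r y - r xh + inner (gF xh + \<rho> *\<^sub>R (gw xh - gw x)) (y - xh)"
proof -
  have "((\<lambda>y. F y + \<rho> * bregman w gw y x) has_derivative
          (\<lambda>h. inner (gF xh + \<rho> *\<^sub>R (gw xh - gw x)) h)) (at xh)"
    by (rule has_derivative_eq_rhs,
        (rule derivative_eq_intros F has_derivative_bregman_left[OF w] | simp)+)
       (simp add: inner_add_left)
  moreover have "xh \<in> X" using xh by (simp add: is_prox_point_def)
  ultimately show ?thesis
    using variational_inequality_smooth_plus_convex[OF _ r X _ y] xh
    by (fastforce simp: is_prox_point_def algebra_simps)
qed

lemma prox_grad_point_variational_inequality:
  assumes w: "(w has_derivative (\<lambda>h. inner (gw xp) h)) (at xp)"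
    and r: "convex_on UNIV r" and X: "convex X"
    and xp: "is_prox_grad_point X gF r w gw \<rho> x xp" and y: "y \<in> X"
  shows "0 \<le> r y - r xp + inner (gF x + \<rho> *\<^sub>R (gw xp - gw x)) (y - xp)"
proof -
  have "((\<lambda>y. inner (gF x) y + \<rho> * bregman w gw y x) has_derivative
          (\<lambda>h. inner (gF x + \<rho> *\<^sub>R (gw xp - gw x)) h)) (at xp)"
    by (rule has_derivative_eq_rhs,
        (rule derivative_eq_intros has_derivative_bregman_left[OF w] | simp)+)
       (simp add: inner_add_left)
  moreover have "xp \<in> X" using xp by (simp add: is_prox_grad_point_def)
  ultimately show ?thesis
    using variational_inequality_smooth_plus_convex[OF _ r X _ y] xp
    by (fastforce simp: is_prox_grad_point_def algebra_simps)
qed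

lemma prox_points_bregman_sym_le_inner:
  assumes F: "(F has_derivative (\<lambda>h. inner (gF xh) h)) (at xh)"
    and wh: "(w has_derivative (\<lambda>h. inner (gw xh) h)) (at xh)"
    and wp: "(w has_derivative (\<lambda>h. inner (gw xp) h)) (at xp)"
    and r: "convex_on UNIV r" and X: "convex X"
    and xh: "is_prox_point X (\<lambda>y. F y + r y) w gw \<rho> x xh"
    and xp: "is_prox_grad_point X gF r w gw \<rho> x xp"
  shows "\<rho> * bregman_sym w gw xh xp \<le> inner (gF xh - gF x) (xp - xh)"
proof -
  have "xh \<in> X" "xp \<in> X"
    using xh xp by (simp_all add: is_prox_point_def is_prox_grad_point_def)
  have "0 \<le> r xp - r xh + inner (gF xh + \<rho> *\<^sub>R (gw xh - gw x)) (xp - xh)"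
    by (rule prox_point_variational_inequality[where gF=gF and gw=gw and xh=xh, OF F wh r X xh \<open>xp \<in> X\<close>])
  moreover have "0 \<le> r xh - r xp + inner (gF x + \<rho> *\<^sub>R (gw xp - gw x)) (xh - xp)"
    by (rule prox_grad_point_variational_inequality[where gw=gw and xp=xp, OF wp r X xp \<open>xh \<in> X\<close>])
  ultimately show ?thesis
    unfolding bregman_sym_eq_inner
    by (simp add: inner_add_left inner_diff_left inner_diff_right algebra_simps)
qed

lemma rel_smooth_scaled_bregman_nonneg:
  assumes "rel_smooth F gF l w gw A" "a \<in> A" "b \<in> A"
  shows "0 \<le> l * bregman w gw a b"
  using assms unfolding rel_smooth_def by force

lemma rel_smooth_inner_grad_diff_le:
  assumes sm: "rel_smooth F gF l w gw A" and A: "a \<in> A" "b \<in> A" "c \<in> A"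
  shows "inner (gF a - gF c) (b - a)
           \<le> l * (bregman_sym w gw a b + bregman_sym w gw a c + bregman_sym w gw b c)"
proof -
  define E where "E u v = F u - F v - inner (gF v) (u - v)" for u v
  have bounds: "- l * bregman w gw u v \<le> E u v \<and> E u v \<le> l * bregman w gw u v"
    if "u \<in> A" "v \<in> A" for u v
    using sm that unfolding rel_smooth_def E_def by blast
  have "inner (gF a - gF c) (b - a) = - E b a + E b c - E a c"
    by (simp add: E_def inner_diff_left inner_diff_right algebra_simps)
  also have "\<dots> \<le> l * bregman w gw b a + l * bregman w gw b c + l * bregman w gw a c"
    using bounds[OF A(2,1)] bounds[OF A(2,3)] bounds[OF A(1,3)] by linarith
  also have "\<dots> \<le> l * (bregman_sym w gw a b + bregman_sym w gw a c + bregman_sym w gw b c)"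
    using rel_smooth_scaled_bregman_nonneg[OF sm] A
    by (fastforce simp: bregman_sym_def algebra_simps intro: add_mono)
  finally show ?thesis .
qed

theorem lemma4:
  fixes X S :: "'a::euclidean_space set"
    and N :: "'a \<Rightarrow> real"
    and F r w :: "'a \<Rightarrow> real"
    and gF gw :: "'a \<Rightarrow> 'a"
    and l \<rho> :: real
    and x xh xp :: 'a
  assumes X: "closed X" "convex X"
    and N: "is_norm N"
    and F: "\<And>z. (F has_derivative (\<lambda>h. inner (gF z) h)) (at z)"
    and r: "convex_on UNIV r" "lsc r"
    and w: "is_DGF X S N w gw"
    and smooth: "rel_smooth F gF l w gw (X \<inter> S)"
    and rho: "\<rho> > l"
    and x: "x \<in> X \<inter> S"
    and xh: "is_prox_point X (\<lambda>y. F y + r y) w gw \<rho> x xh" "xh \<in> S"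
    and xp: "is_prox_grad_point X gF r w gw \<rho> x xp" "xp \<in> S"
  shows "\<rho>\<^sup>2 * bregman_sym w gw xh xp
           \<le> l / (\<rho> - l) * (\<rho>\<^sup>2 * bregman_sym w gw xh x + \<rho>\<^sup>2 * bregman_sym w gw xp x)"
proof -
  have dw: "(w has_derivative (\<lambda>h. inner (gw z) h)) (at z)" if "z \<in> S" for z
    using w that by (simp add: is_DGF_def)
  have "xh \<in> X \<inter> S" "xp \<in> X \<inter> S"
    using xh xp by (simp_all add: is_prox_point_def is_prox_grad_point_def)
  have "\<rho> * bregman_sym w gw xh xp \<le> inner (gF xh - gF x) (xp - xh)"
    by (rule prox_points_bregman_sym_le_inner[OF F dw[OF xh(2)] dw[OF xp(2)] r(1) X(2) xh(1) xp(1)])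
  also have "\<dots> \<le> l * (bregman_sym w gw xh xp + bregman_sym w gw xh x + bregman_sym w gw xp x)"
    by (rule rel_smooth_inner_grad_diff_le[OF smooth \<open>xh \<in> X \<inter> S\<close> \<open>xp \<in> X \<inter> S\<close> x])
  finally have "(\<rho> - l) * bregman_sym w gw xh xp \<le> l * (bregman_sym w gw xh x + bregman_sym w gw xp x)"
    by (simp add: algebra_simps)
  hence "bregman_sym w gw xh xp \<le> l / (\<rho> - l) * (bregman_sym w gw xh x + bregman_sym w gw xp x)"
    using rho by (simp add: field_simps)
  from mult_left_mono[OF this zero_le_power2[of \<rho>]] show ?thesis
    by (simp add: algebra_simps)
qed

end
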